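(* Let $\Omega \subset \mathbb{R}^N$ be closed and nonempty, let $p>1$, $\mu>0$, and let $f(x) := \frac{\mu}{p} d_\Omega(x)^p$. Then (1) $f$ is globally $p$-conditioned with constant $\mu$: for all $x\in\mathbb{R}^N$, $\frac{\mu}{p} d_{\operatorname{argmin} f}(x)^p \le f(x)-\inf f$; (2) $f$ is globally $p$-submetric regular with constant $\mu$: for all $x\in\mathbb{R}^N$ and all $x^*\in\partial_L f(x)$, $\mu\, d_{\operatorname{argmin} f}(x)^{p-1}\le \|x^*\|$.
   Context: For a closed set $S\subset\mathbb{R}^N$ (not necessarily convex), $d_S(x) := \inf_{y\in S}\|y-x\|$ (Euclidean norm). For $g:\mathbb{R}^N\to\mathbb{R}$, the Fréchet subdifferential $\partial_F g(x)$ is the set of $x^*$ with $\liminf_{y\to x} \frac{g(y)-g(x)-\langle x^*,y-x\rangle}{\|y-x\|}\ge 0$; the limiting subdifferential $\partial_L g(x)$ is the set of $x^*$ for which there exist $x_n\to x$ and $x_n^*\to x^*$ with $g(x_n)\to g(x)$ and $x_n^*\in\partial_F g(x_n)$. *)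

theory Defs
  imports "HOL-Analysis.Analysis"
begin

definition argmin_set :: "('a \<Rightarrow> real) \<Rightarrow> 'a set" where
  "argmin_set g = {x. \<forall>y. g x \<le> g y}"

definition frechet_subdiff :: "('a::real_inner \<Rightarrow> real) \<Rightarrow> 'a \<Rightarrow> 'a set" where
  "frechet_subdiff g x = {xs. Liminf (at x)
      (\<lambda>y. ereal ((g y - g x - inner xs (y - x)) / norm (y - x))) \<ge> 0}"

definition limiting_subdiff :: "('a::real_inner \<Rightarrow> real) \<Rightarrow> 'a \<Rightarrow> 'a set" where
  "limiting_subdiff g x = {xs. \<exists>u v. u \<longlonglongrightarrow> x \<and> v \<longlonglongrightarrow> xs \<and>
      (\<lambda>n. g (u n)) \<longlonglongrightarrow> g x \<and> (\<forall>n. v n \<in> frechet_subdiff g (u n))}"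

end

theory Submission
  imports Defs
begin

text \<open>
  Since \<open>f\<close> is nonnegative and vanishes exactly on the closed set \<open>\<Omega>\<close>, we have
  \<open>argmin f = \<Omega>\<close> and \<open>inf f = 0\<close>, so (1) holds with equality. For (2), let \<open>x \<notin> \<Omega>\<close>
  and let \<open>z\<close> be a nearest point of \<open>\<Omega>\<close>, at distance \<open>d\<close>. On the segment from \<open>x\<close> to \<open>z\<close>,
  \<open>f\<close> is bounded above by \<open>t \<mapsto> \<mu>/p ((1 - t) d)\<^sup>p\<close>, which agrees with \<open>f\<close> at \<open>x\<close>
  and has slope \<open>-\<mu> d\<^sup>p\<close> there. Hence every Frechet subgradient \<open>x\<^sup>*\<close> satisfies
  \<open>\<langle>x\<^sup>*, z - x\<rangle> \<le> -\<mu> d\<^sup>p\<close>, and Cauchy-Schwarz gives \<open>\<mu> d\<^bsup>p - 1\<^esup> \<le> \<parallel>x\<^sup>*\<parallel>\<close>. As \<open>p > 1\<close>,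
  the left-hand side is continuous in \<open>x\<close>, so the bound passes to limiting subgradients.
\<close>

lemma argmin_set_eq_zero_set:
  fixes g :: "'a \<Rightarrow> real"
  assumes nonneg: "\<And>x. g x \<ge> 0" and zero_iff: "\<And>x. g x = 0 \<longleftrightarrow> x \<in> S" and "S \<noteq> {}"
  shows "argmin_set g = S"
proof -
  obtain s where "g s = 0"
    using \<open>S \<noteq> {}\<close> zero_iff by blast
  then have "(\<forall>y. g x \<le> g y) \<longleftrightarrow> g x = 0" for x
    using nonneg by (metis antisym)
  then show ?thesis
    using zero_iff unfolding argmin_set_def by blast
qed

lemma frechet_subgradient_inner_le_majorant_derivative:
  fixes g :: "'a::real_inner \<Rightarrow> real"
  assumes xs: "xs \<in> frechet_subdiff g x" and u: "u \<noteq> 0"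
    and majorant: "\<forall>\<^sub>F t in at_right 0. g (x + t *\<^sub>R u) \<le> \<phi> t"
    and touching: "\<phi> 0 = g x"
    and deriv: "(\<phi> has_real_derivative D) (at_right 0)"
  shows "inner xs u \<le> D"
proof -
  define q where "q t = ((\<phi> t - \<phi> 0) / t - inner xs u) / norm u" for t
  have q_lim: "(q \<longlongrightarrow> (D - inner xs u) / norm u) (at_right 0)"
    using deriv u unfolding has_field_derivative_iff q_def by (intro tendsto_intros) auto
  have ray: "filterlim (\<lambda>t. x + t *\<^sub>R u) (at x) (at_right 0)"
  proof (rule filterlim_atI)
    show "((\<lambda>t. x + t *\<^sub>R u) \<longlongrightarrow> x) (at_right 0)"
      by (auto intro!: tendsto_eq_intros)
    show "\<forall>\<^sub>F t in at_right 0. x + t *\<^sub>R u \<noteq> x"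
      using u by (simp add: eventually_at_filter)
  qed
  have "e \<le> (D - inner xs u) / norm u" if e: "e < 0" for e
  proof (rule tendsto_lowerbound[OF q_lim])
    have "0 \<le> Liminf (at x) (\<lambda>y. ereal ((g y - g x - inner xs (y - x)) / norm (y - x)))"
      using xs unfolding frechet_subdiff_def by simp
    moreover have "ereal e < 0"
      using e by simp
    ultimately have "\<forall>\<^sub>F y in at x. ereal e < ereal ((g y - g x - inner xs (y - x)) / norm (y - x))"
      unfolding le_Liminf_iff by blast
    from eventually_compose_filterlim[OF this ray]
    have "\<forall>\<^sub>F t in at_right 0.
        e < (g (x + t *\<^sub>R u) - g x - inner xs (t *\<^sub>R u)) / norm (t *\<^sub>R u)"
      by simp
    then show "\<forall>\<^sub>F t in at_right 0. e \<le> q t"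
      using majorant eventually_at_right_less[of 0]
    proof eventually_elim
      case (elim t)
      then have "e < (g (x + t *\<^sub>R u) - g x - t * inner xs u) / (t * norm u)"
        by (simp add: abs_of_pos)
      also have "\<dots> \<le> (\<phi> t - \<phi> 0 - t * inner xs u) / (t * norm u)"
        using elim u touching by (intro divide_right_mono) auto
      also have "\<dots> = q t"
        using elim u by (simp add: q_def field_simps)
      finally show ?case by simp
    qed
  qed simp
  then have "0 \<le> (D - inner xs u) / norm u"
    by (rule dense_le)
  then show ?thesis
    using u by (simp add: zero_le_divide_iff)
qed

lemma infdist_le_along_segment:
  fixes x z :: "'a::real_normed_vector"
  assumes "z \<in> A" and "t \<le> 1"
  shows "infdist (x + t *\<^sub>R (z - x)) A \<le> (1 - t) * dist x z"
proof -
  have "x + t *\<^sub>R (z - x) - z = (1 - t) *\<^sub>R (x - z)"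
    by (simp add: algebra_simps)
  then have "dist (x + t *\<^sub>R (z - x)) z = (1 - t) * dist x z"
    using assms(2) by (simp add: dist_norm)
  then show ?thesis
    using infdist_le[OF assms(1)] by metis
qed

lemma frechet_subgradient_norm_ge_infdist_powr:
  fixes \<Omega> :: "'a::{real_inner, heine_borel} set"
  assumes "closed \<Omega>" and "\<Omega> \<noteq> {}" and p: "p > 0" and \<mu>: "\<mu> \<ge> 0"
    and xs: "xs \<in> frechet_subdiff (\<lambda>y. \<mu> / p * infdist y \<Omega> powr p) x"
  shows "\<mu> * infdist x \<Omega> powr (p - 1) \<le> norm xs"
proof (cases "infdist x \<Omega> = 0")
  case True
  then show ?thesis by simp
next
  case False
  obtain z where "z \<in> \<Omega>" and infdist_eq: "infdist x \<Omega> = dist x z"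
    using infdist_attains_inf[OF assms(1,2)] by blast
  define d where "d = dist x z"
  have "d > 0"
    using False infdist_eq unfolding d_def by simp
  have "inner xs (z - x) \<le> - \<mu> * d powr (p - 1) * d"
  proof (rule frechet_subgradient_inner_le_majorant_derivative
      [OF xs, where \<phi> = "\<lambda>t. \<mu> / p * ((1 - t) * d) powr p"])
    show "z - x \<noteq> 0"
      using \<open>d > 0\<close> unfolding d_def by auto
    show "\<forall>\<^sub>F t in at_right 0.
        \<mu> / p * infdist (x + t *\<^sub>R (z - x)) \<Omega> powr p \<le> \<mu> / p * ((1 - t) * d) powr p"
    proof (rule eventually_at_rightI[of 0 1])
      fix t :: real
      assume "t \<in> {0<..<1}"
      then have "infdist (x + t *\<^sub>R (z - x)) \<Omega> \<le> (1 - t) * d"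
        using infdist_le_along_segment[OF \<open>z \<in> \<Omega>\<close>] by (simp add: d_def)
      then show "\<mu> / p * infdist (x + t *\<^sub>R (z - x)) \<Omega> powr p \<le> \<mu> / p * ((1 - t) * d) powr p"
        using p \<mu> by (intro mult_left_mono powr_mono2) (auto simp: infdist_nonneg)
    qed simp
    show "\<mu> / p * ((1 - 0) * d) powr p = \<mu> / p * infdist x \<Omega> powr p"
      using infdist_eq by (simp add: d_def)
    have "((\<lambda>t. (1 - t) * d) has_real_derivative - d) (at 0)"
      by (auto intro!: derivative_eq_intros)
    from DERIV_fun_powr[OF this, of p] \<open>d > 0\<close>
    have "((\<lambda>t. ((1 - t) * d) powr p) has_real_derivative p * d powr (p - 1) * (- d)) (at 0)"
      by simp
    from DERIV_cmult[OF this, of "\<mu> / p"]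
    have "((\<lambda>t. \<mu> / p * ((1 - t) * d) powr p) has_real_derivative - \<mu> * d powr (p - 1) * d) (at 0)"
      using p by (simp add: mult.assoc)
    then show "((\<lambda>t. \<mu> / p * ((1 - t) * d) powr p) has_real_derivative - \<mu> * d powr (p - 1) * d)
        (at_right 0)"
      by (rule has_field_derivative_at_within)
  qed
  moreover have "inner xs (x - z) \<le> norm xs * d"
    using norm_cauchy_schwarz[of xs "x - z"] by (simp add: d_def dist_norm)
  ultimately have "\<mu> * d powr (p - 1) * d \<le> norm xs * d"
    by (simp add: inner_diff_right)
  then show ?thesis
    using \<open>d > 0\<close> infdist_eq by (simp add: d_def)
qed

lemma limiting_subdiff_norm_ge:
  fixes g :: "'a::real_inner \<Rightarrow> real"
  assumes frechet_bound: "\<And>y v. v \<in> frechet_subdiff g y \<Longrightarrow> \<phi> y \<le> norm v"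
    and "isCont \<phi> x" and "xs \<in> limiting_subdiff g x"
  shows "\<phi> x \<le> norm xs"
proof -
  obtain u v where "u \<longlonglongrightarrow> x" and "v \<longlonglongrightarrow> xs" and "\<And>n. v n \<in> frechet_subdiff g (u n)"
    using \<open>xs \<in> limiting_subdiff g x\<close> unfolding limiting_subdiff_def by blast
  moreover have "(\<lambda>n. \<phi> (u n)) \<longlonglongrightarrow> \<phi> x"
    using \<open>isCont \<phi> x\<close> \<open>u \<longlonglongrightarrow> x\<close> by (rule isCont_tendsto_compose)
  ultimately show ?thesis
    using frechet_bound
    by (intro LIMSEQ_le[where X = "\<lambda>n. \<phi> (u n)" and Y = "\<lambda>n. norm (v n)"]) (auto intro: tendsto_norm)
qed

lemma isCont_infdist_powr:
  fixes q :: real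
  assumes "q > 0"
  shows "isCont (\<lambda>y. infdist y A powr q) x"
  unfolding isCont_def using assms
  by (intro tendsto_powr' tendsto_infdist tendsto_ident_at tendsto_const) (auto simp: infdist_nonneg)

theorem proposition1:
  fixes \<Omega> :: "'a::euclidean_space set" and p \<mu> :: real and f :: "'a \<Rightarrow> real"
  assumes "closed \<Omega>" and "\<Omega> \<noteq> {}" and "p > 1" and "\<mu> > 0"
    and "\<And>x. f x = \<mu> / p * infdist x \<Omega> powr p"
  shows "(\<forall>x. \<mu> / p * infdist x (argmin_set f) powr p \<le> f x - (INF y. f y))
       \<and> (\<forall>x xs. xs \<in> limiting_subdiff f x \<longrightarrow>
            \<mu> * infdist x (argmin_set f) powr (p - 1) \<le> norm xs)"
proof -
  have f_eq: "f = (\<lambda>y. \<mu> / p * infdist y \<Omega> powr p)"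
    using assms(5) by blast
  have f_nonneg: "f y \<ge> 0" for y
    using assms(3,4) by (simp add: f_eq)
  have f_eq_0_iff: "f y = 0 \<longleftrightarrow> y \<in> \<Omega>" for y
    using assms(3,4) in_closed_iff_infdist_zero[OF assms(1,2)] by (simp add: f_eq)
  have argmin: "argmin_set f = \<Omega>"
    using f_nonneg f_eq_0_iff assms(2) by (rule argmin_set_eq_zero_set)
  obtain w where "w \<in> \<Omega>"
    using assms(2) by blast
  then have "(INF y. f y) = 0"
    using f_nonneg f_eq_0_iff by (intro cInf_eq_minimum) auto
  moreover have "\<mu> * infdist x \<Omega> powr (p - 1) \<le> norm xs" if "xs \<in> limiting_subdiff f x" for x xs
  proof (rule limiting_subdiff_norm_ge[OF _ _ that])
    show "\<mu> * infdist y \<Omega> powr (p - 1) \<le> norm v" if "v \<in> frechet_subdiff f y" for y v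
      using frechet_subgradient_norm_ge_infdist_powr[OF assms(1,2)] that assms(3,4)
      unfolding f_eq by simp
    show "isCont (\<lambda>y. \<mu> * infdist y \<Omega> powr (p - 1)) x"
      using assms(3) by (intro continuous_intros isCont_infdist_powr) simp
  qed
  ultimately show ?thesis
    using argmin assms(5) by simp
qed

end
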